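(* Let $1\to B\to A\xrightarrow{\pi}H\to1$ be a central exact sequence of Hopf algebras such that $A$ is noetherian. If $\mathcal{HZ}(H)=k$, then $B=\mathcal{HZ}(A)$.
   Context: Hopf algebras over a field $k$, with bijective antipode. A sequence $1\to B\xrightarrow{\iota}A\xrightarrow{\pi}H\to1$ of Hopf algebra maps is exact if $\iota$ is injective, $\pi$ surjective, $\operatorname{Ker}\pi=AB^+$ ($B^+=\operatorname{Ker}\varepsilon$) and $B={}^{\mathrm{co}\,\pi}A$; it is central if $B$ is central in $A$. $\mathcal{HZ}(A)$ denotes the Hopf center of $A$, i.e. its maximal central Hopf subalgebra. *)

theory Defs
  imports Complex_Main
begin

text \<open>A formal k-linear combination of "words" (pairs or triples of vectors)
  is a list of (coefficient, word). Its value in the free k-vector space on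
  the words is the function word -> total coefficient.\<close>

definition fval :: "('k::comm_monoid_add \<times> 'w) list \<Rightarrow> 'w \<Rightarrow> 'k" where
  "fval L w = sum_list (map fst (filter (\<lambda>p. snd p = w) L))"

definition fneg :: "('k::uminus \<times> 'w) list \<Rightarrow> ('k \<times> 'w) list" where
  "fneg L = map (\<lambda>(c, w). (- c, w)) L"

text \<open>Formal sums lying in the span of the bilinearity relations (X (x) Y).\<close>
inductive tspan2 :: "('k::field \<Rightarrow> 'x::plus \<Rightarrow> 'x) \<Rightarrow> ('k \<Rightarrow> 'y::plus \<Rightarrow> 'y)
    \<Rightarrow> ('k \<times> ('x \<times> 'y)) list \<Rightarrow> bool" for sx sy where
  nil: "tspan2 sx sy []"
| app: "tspan2 sx sy L \<Longrightarrow> tspan2 sx sy M \<Longrightarrow> tspan2 sx sy (L @ M)"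
| add1: "tspan2 sx sy [(d, (x + x', y)), (- d, (x, y)), (- d, (x', y))]"
| add2: "tspan2 sx sy [(d, (x, y + y')), (- d, (x, y)), (- d, (x, y'))]"
| scl1: "tspan2 sx sy [(d, (sx c x, y)), (- (c * d), (x, y))]"
| scl2: "tspan2 sx sy [(d, (x, sy c y)), (- (c * d), (x, y))]"

text \<open>Equality of the represented elements of X (x) Y.\<close>
definition teq2 where
  "teq2 sx sy L M \<longleftrightarrow> (\<exists>R. tspan2 sx sy R \<and> fval R = fval (L @ fneg M))"

inductive tspan3 :: "('k::field \<Rightarrow> 'x::plus \<Rightarrow> 'x) \<Rightarrow> ('k \<Rightarrow> 'y::plus \<Rightarrow> 'y)
    \<Rightarrow> ('k \<Rightarrow> 'z::plus \<Rightarrow> 'z) \<Rightarrow> ('k \<times> ('x \<times> 'y \<times> 'z)) list \<Rightarrow> bool" for sx sy sz where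
  nil: "tspan3 sx sy sz []"
| app: "tspan3 sx sy sz L \<Longrightarrow> tspan3 sx sy sz M \<Longrightarrow> tspan3 sx sy sz (L @ M)"
| add1: "tspan3 sx sy sz [(d, (x + x', y, z)), (- d, (x, y, z)), (- d, (x', y, z))]"
| add2: "tspan3 sx sy sz [(d, (x, y + y', z)), (- d, (x, y, z)), (- d, (x, y', z))]"
| add3: "tspan3 sx sy sz [(d, (x, y, z + z')), (- d, (x, y, z)), (- d, (x, y, z'))]"
| scl1: "tspan3 sx sy sz [(d, (sx c x, y, z)), (- (c * d), (x, y, z))]"
| scl2: "tspan3 sx sy sz [(d, (x, sy c y, z)), (- (c * d), (x, y, z))]"
| scl3: "tspan3 sx sy sz [(d, (x, y, sz c z)), (- (c * d), (x, y, z))]"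

definition teq3 where
  "teq3 sx sy sz L M \<longleftrightarrow> (\<exists>R. tspan3 sx sy sz R \<and> fval R = fval (L @ fneg M))"

text \<open>The comultiplication of a
  is given by a representative formal sum of elements of A (x) A.\<close>
record ('k, 'a) hopf_str =
  hsc :: "'k \<Rightarrow> 'a \<Rightarrow> 'a"
  comul :: "'a \<Rightarrow> ('k \<times> ('a \<times> 'a)) list"
  counit :: "'a \<Rightarrow> 'k"
  antip :: "'a \<Rightarrow> 'a"

definition is_hopf_algebra :: "('k::field, 'a::ring_1) hopf_str \<Rightarrow> bool" where
  "is_hopf_algebra A \<longleftrightarrow>
     \<comment> \<open>k-algebra\<close>
     vector_space (hsc A) \<and>
     (\<forall>c a b. hsc A c (a * b) = hsc A c a * b \<and> hsc A c (a * b) = a * hsc A c b) \<and>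
     \<comment> \<open>comultiplication: linear, coassociative, algebra map\<close>
     (\<forall>a b. teq2 (hsc A) (hsc A) (comul A (a + b)) (comul A a @ comul A b)) \<and>
     (\<forall>c a. teq2 (hsc A) (hsc A) (comul A (hsc A c a))
                 [(c * d, w). (d, w) \<leftarrow> comul A a]) \<and>
     (\<forall>a. teq3 (hsc A) (hsc A) (hsc A)
            [(c * d, (x1, x2, y)). (c, (x, y)) \<leftarrow> comul A a, (d, (x1, x2)) \<leftarrow> comul A x]
            [(c * d, (x, y1, y2)). (c, (x, y)) \<leftarrow> comul A a, (d, (y1, y2)) \<leftarrow> comul A y]) \<and>
     (\<forall>a b. teq2 (hsc A) (hsc A) (comul A (a * b))
            [(c * d, (x * x', y * y')). (c, (x, y)) \<leftarrow> comul A a, (d, (x', y')) \<leftarrow> comul A b]) \<and>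
     teq2 (hsc A) (hsc A) (comul A 1) [(1, (1, 1))] \<and>
     \<comment> \<open>counit: linear, algebra map, counit axioms\<close>
     (\<forall>a b. counit A (a + b) = counit A a + counit A b) \<and>
     (\<forall>c a. counit A (hsc A c a) = c * counit A a) \<and>
     (\<forall>a b. counit A (a * b) = counit A a * counit A b) \<and>
     counit A 1 = 1 \<and>
     (\<forall>a. sum_list [hsc A (c * counit A x) y. (c, (x, y)) \<leftarrow> comul A a] = a) \<and>
     (\<forall>a. sum_list [hsc A (c * counit A y) x. (c, (x, y)) \<leftarrow> comul A a] = a) \<and>
     \<comment> \<open>antipode: linear, convolution inverse of the identity, bijective\<close>
     (\<forall>a b. antip A (a + b) = antip A a + antip A b) \<and>
     (\<forall>c a. antip A (hsc A c a) = hsc A c (antip A a)) \<and>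
     (\<forall>a. sum_list [hsc A c (antip A x * y). (c, (x, y)) \<leftarrow> comul A a] = hsc A (counit A a) 1) \<and>
     (\<forall>a. sum_list [hsc A c (x * antip A y). (c, (x, y)) \<leftarrow> comul A a] = hsc A (counit A a) 1) \<and>
     bij (antip A)"

text \<open>Hopf algebra maps (= bialgebra maps between Hopf algebras).\<close>
definition is_hopf_map ::
  "('k::field, 'a::ring_1) hopf_str \<Rightarrow> ('k, 'b::ring_1) hopf_str \<Rightarrow> ('a \<Rightarrow> 'b) \<Rightarrow> bool" where
  "is_hopf_map A B f \<longleftrightarrow>
     (\<forall>x y. f (x + y) = f x + f y) \<and>
     (\<forall>c x. f (hsc A c x) = hsc B c (f x)) \<and>
     (\<forall>x y. f (x * y) = f x * f y) \<and> f 1 = 1 \<and>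
     (\<forall>x. teq2 (hsc B) (hsc B) (comul B (f x)) [(c, (f y, f z)). (c, (y, z)) \<leftarrow> comul A x]) \<and>
     (\<forall>x. counit B (f x) = counit A x)"

definition center :: "'a::ring_1 set" where
  "center = {z. \<forall>x. z * x = x * z}"

definition is_hopf_subalgebra :: "('k::field, 'a::ring_1) hopf_str \<Rightarrow> 'a set \<Rightarrow> bool" where
  "is_hopf_subalgebra A C \<longleftrightarrow>
     module.subspace (hsc A) C \<and> 1 \<in> C \<and> (\<forall>x\<in>C. \<forall>y\<in>C. x * y \<in> C) \<and>
     (\<forall>x\<in>C. \<exists>L. (\<forall>(c, (y, z)) \<in> set L. y \<in> C \<and> z \<in> C) \<and> teq2 (hsc A) (hsc A) (comul A x) L) \<and>
     (\<forall>x\<in>C. antip A x \<in> C)"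

definition is_central_hopf_subalgebra :: "('k::field, 'a::ring_1) hopf_str \<Rightarrow> 'a set \<Rightarrow> bool" where
  "is_central_hopf_subalgebra A C \<longleftrightarrow> is_hopf_subalgebra A C \<and> C \<subseteq> center"

definition hopf_center :: "('k::field, 'a::ring_1) hopf_str \<Rightarrow> 'a set" where
  "hopf_center A = (THE C. is_central_hopf_subalgebra A C \<and>
                      (\<forall>D. is_central_hopf_subalgebra A D \<longrightarrow> D \<subseteq> C))"

text \<open>The base field k inside A, i.e. k1.\<close>
definition scalars :: "('k::field, 'a::ring_1) hopf_str \<Rightarrow> 'a set" where
  "scalars A = range (\<lambda>c. hsc A c 1)"

definition left_ideal :: "'a::ring_1 set \<Rightarrow> bool" where
  "left_ideal I \<longleftrightarrow> 0 \<in> I \<and> (\<forall>x\<in>I. \<forall>y\<in>I. x + y \<in> I) \<and> (\<forall>x\<in>I. - x \<in> I) \<and>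
     (\<forall>a. \<forall>x\<in>I. a * x \<in> I)"

definition right_ideal :: "'a::ring_1 set \<Rightarrow> bool" where
  "right_ideal I \<longleftrightarrow> 0 \<in> I \<and> (\<forall>x\<in>I. \<forall>y\<in>I. x + y \<in> I) \<and> (\<forall>x\<in>I. - x \<in> I) \<and>
     (\<forall>a. \<forall>x\<in>I. x * a \<in> I)"

definition noetherian_ring :: "'a::ring_1 itself \<Rightarrow> bool" where
  "noetherian_ring _ \<longleftrightarrow>
     (\<forall>I :: nat \<Rightarrow> 'a set. (\<forall>n. left_ideal (I n) \<and> I n \<subseteq> I (Suc n)) \<longrightarrow>
        (\<exists>m. \<forall>n\<ge>m. I n = I m)) \<and>
     (\<forall>I :: nat \<Rightarrow> 'a set. (\<forall>n. right_ideal (I n) \<and> I n \<subseteq> I (Suc n)) \<longrightarrow>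
        (\<exists>m. \<forall>n\<ge>m. I n = I m))"

definition left_coinv ::
  "('k::field, 'a::ring_1) hopf_str \<Rightarrow> ('k, 'h::ring_1) hopf_str \<Rightarrow> ('a \<Rightarrow> 'h) \<Rightarrow> 'a set" where
  "left_coinv A H \<pi> = {a. teq2 (hsc H) (hsc A)
       [(c, (\<pi> x, y)). (c, (x, y)) \<leftarrow> comul A a] [(1, (1, a))]}"

definition exact_seq ::
  "('k::field, 'b::ring_1) hopf_str \<Rightarrow> ('k, 'a::ring_1) hopf_str \<Rightarrow> ('k, 'h::ring_1) hopf_str
     \<Rightarrow> ('b \<Rightarrow> 'a) \<Rightarrow> ('a \<Rightarrow> 'h) \<Rightarrow> bool" where
  "exact_seq B A H \<iota> \<pi> \<longleftrightarrow>
     is_hopf_algebra B \<and> is_hopf_algebra A \<and> is_hopf_algebra H \<and>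
     is_hopf_map B A \<iota> \<and> is_hopf_map A H \<pi> \<and>
     inj \<iota> \<and> surj \<pi> \<and>
     {a. \<pi> a = 0} = module.span (hsc A) {a * \<iota> b | a b. counit B b = 0} \<and>
     range \<iota> = left_coinv A H \<pi>"

definition central_exact_seq where
  "central_exact_seq B A H \<iota> \<pi> \<longleftrightarrow> exact_seq B A H \<iota> \<pi> \<and> range \<iota> \<subseteq> center"

end

theory Submission
  imports Defs
begin

text \<open>Let Z be the Hopf center of A. The image of B is a central Hopf subalgebra, so it lies in Z.
  Conversely, \<open>\<pi>(Z)\<close> is a central Hopf subalgebra of H and hence lies in \<open>HZ(H) = k1\<close>; thus
  \<open>\<pi>(z) = \<epsilon>(z)1\<close> on Z, so that \<open>(\<pi> \<otimes> id)\<Delta>(z) = 1 \<otimes> \<epsilon>(z\<^sub>1)z\<^sub>2 = 1 \<otimes> z\<close> and Z consists of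
  coinvariants, which by exactness form the image of B.

  Since \<open>hopf_center\<close> is a definite description, Z must also be shown to exist: any two central
  Hopf subalgebras lie in a third, the span of their products, so the union of all of them is the
  largest one. This uses that the antipode reverses products and that Hopf maps commute with
  antipodes, both instances of the uniqueness of convolution inverses.\<close>

section \<open>Formal linear combinations\<close>

definition eval_fsum ::
    "('k \<Rightarrow> 'v::ab_group_add \<Rightarrow> 'v) \<Rightarrow> ('w \<Rightarrow> 'v) \<Rightarrow> ('k \<times> 'w) list \<Rightarrow> 'v" where
  "eval_fsum sc G L = (\<Sum>(c, w)\<leftarrow>L. sc c (G w))"

definition fsmul :: "'k::times \<Rightarrow> ('k \<times> 'w) list \<Rightarrow> ('k \<times> 'w) list" where
  "fsmul e L = map (\<lambda>(c, w). (e * c, w)) L"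

definition tensor_mult ::
    "('k::times \<times> ('a::times \<times> 'a)) list \<Rightarrow> ('k \<times> ('a \<times> 'a)) list \<Rightarrow> ('k \<times> ('a \<times> 'a)) list" where
  "tensor_mult L M = [(c * d, (x * x', y * y')). (c, (x, y)) \<leftarrow> L, (d, (x', y')) \<leftarrow> M]"

lemma eval_fsum_Nil [simp]: "eval_fsum sc G [] = 0"
  and eval_fsum_Cons [simp]: "eval_fsum sc G ((c, w) # L) = sc c (G w) + eval_fsum sc G L"
  and eval_fsum_append [simp]: "eval_fsum sc G (L @ M) = eval_fsum sc G L + eval_fsum sc G M"
  by (simp_all add: eval_fsum_def)

lemma fval_Nil [simp]: "fval [] w = 0"
  and fval_Cons [simp]: "fval ((c, w0) # L) w = (if w0 = w then c else 0) + fval L w"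
  and fval_append [simp]: "fval (L @ M) w = fval L w + fval M w"
  by (simp_all add: fval_def)

lemma fneg_Nil [simp]: "fneg [] = []"
  and fneg_Cons [simp]: "fneg ((c, w) # L) = (- c, w) # fneg L"
  and fneg_append [simp]: "fneg (L @ M) = fneg L @ fneg M"
  by (simp_all add: fneg_def)

lemma fsmul_Nil [simp]: "fsmul e [] = []"
  and fsmul_Cons [simp]: "fsmul e ((c, w) # L) = (e * c, w) # fsmul e L"
  and fsmul_append [simp]: "fsmul e (L @ M) = fsmul e L @ fsmul e M"
  by (simp_all add: fsmul_def)

lemma fval_fneg [simp]: "fval (fneg L) w = - fval L w"
  for L :: "('k::ab_group_add \<times> 'w) list"
  by (induction L) auto

lemma fval_fsmul [simp]: "fval (fsmul e L) w = e * fval L w"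
  for L :: "('k::comm_ring \<times> 'w) list"
  by (induction L) (auto simp: algebra_simps)

definition bilinear_map ::
    "('k \<Rightarrow> 'x::plus \<Rightarrow> 'x) \<Rightarrow> ('k \<Rightarrow> 'y::plus \<Rightarrow> 'y) \<Rightarrow> ('k \<Rightarrow> 'v::plus \<Rightarrow> 'v) \<Rightarrow> ('x \<Rightarrow> 'y \<Rightarrow> 'v) \<Rightarrow> bool" where
  "bilinear_map sx sy sv g \<longleftrightarrow>
     (\<forall>x x' y. g (x + x') y = g x y + g x' y) \<and> (\<forall>x y y'. g x (y + y') = g x y + g x y') \<and>
     (\<forall>c x y. g (sx c x) y = sv c (g x y)) \<and> (\<forall>c x y. g x (sy c y) = sv c (g x y))"

lemma bilinear_mapD:
  assumes "bilinear_map sx sy sv F"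
  shows "F (x + x') y = F x y + F x' y" "F x (y + y') = F x y + F x y'"
    "F (sx c x) y = sv c (F x y)" "F x (sy c y) = sv c (F x y)"
  using assms unfolding bilinear_map_def by blast+

definition trilinear_map ::
    "('k \<Rightarrow> 'x::plus \<Rightarrow> 'x) \<Rightarrow> ('k \<Rightarrow> 'y::plus \<Rightarrow> 'y) \<Rightarrow> ('k \<Rightarrow> 'z::plus \<Rightarrow> 'z) \<Rightarrow> ('k \<Rightarrow> 'v::plus \<Rightarrow> 'v)
       \<Rightarrow> ('x \<Rightarrow> 'y \<Rightarrow> 'z \<Rightarrow> 'v) \<Rightarrow> bool" where
  "trilinear_map sx sy sz sv g \<longleftrightarrow>
     (\<forall>x x' y z. g (x + x') y z = g x y z + g x' y z) \<and>
     (\<forall>x y y' z. g x (y + y') z = g x y z + g x y' z) \<and>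
     (\<forall>x y z z'. g x y (z + z') = g x y z + g x y z') \<and>
     (\<forall>c x y z. g (sx c x) y z = sv c (g x y z)) \<and> (\<forall>c x y z. g x (sy c y) z = sv c (g x y z)) \<and>
     (\<forall>c x y z. g x y (sz c z) = sv c (g x y z))"

lemma eval_fsum_linear:
  assumes "\<And>a b. h (a + b) = h a + h b" "\<And>c v. h (sc c v) = sc' c (h v)"
  shows "h (eval_fsum sc G L) = eval_fsum sc' (\<lambda>w. h (G w)) L"
proof -
  have "h 0 = 0" using assms(1)[of 0 0] by simp
  then show ?thesis by (induction L) (auto simp: assms)
qed

lemma eval_fsum_cong: "(\<And>w. w \<in> snd ` set L \<Longrightarrow> G w = G' w) \<Longrightarrow> eval_fsum sc G L = eval_fsum sc G' L"
  by (induction L) auto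

lemma eval_fsum_map_apsnd: "eval_fsum sc G (map (apsnd F) L) = eval_fsum sc (\<lambda>w. G (F w)) L"
  by (induction L) auto

lemma eval_fsum_pairs: "eval_fsum sc G L = (\<Sum>(c, x, y)\<leftarrow>L. sc c (G (x, y)))"
  unfolding eval_fsum_def by (simp add: case_prod_beta')

context module
begin

lemma eval_fsum_eq_sum_fval:
  assumes "finite W" "snd ` set L \<subseteq> W"
  shows "eval_fsum scale G L = (\<Sum>w\<in>W. scale (fval L w) (G w))"
  using assms(2)
proof (induction L)
  case (Cons p L)
  obtain c w0 where p: "p = (c, w0)" by (cases p)
  have "w0 \<in> W" using Cons.prems p by auto
  have "(\<Sum>w\<in>W. scale (if w0 = w then c else 0) (G w)) = (\<Sum>w\<in>W. if w0 = w then scale c (G w) else 0)"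
    by (rule sum.cong) auto
  also have "\<dots> = scale c (G w0)" using \<open>w0 \<in> W\<close> assms(1) by simp
  finally show ?case using Cons p by (simp add: scale_left_distrib sum.distrib)
qed simp

lemma eval_fsum_cong_fval:
  assumes "fval L = fval M"
  shows "eval_fsum scale G L = eval_fsum scale G M"
proof -
  let ?W = "snd ` set L \<union> snd ` set M"
  have "eval_fsum scale G L = (\<Sum>w\<in>?W. scale (fval L w) (G w))"
    by (rule eval_fsum_eq_sum_fval) auto
  also have "\<dots> = eval_fsum scale G M"
    unfolding assms by (rule eval_fsum_eq_sum_fval[symmetric]) auto
  finally show ?thesis .
qed

lemma eval_fsum_fneg: "eval_fsum scale G (fneg L) = - eval_fsum scale G L"
  by (induction L) auto

lemma eval_fsum_add_fun [simp]:
  "eval_fsum scale (\<lambda>w. G w + G' w) L = eval_fsum scale G L + eval_fsum scale G' L"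
  by (induction L) (auto simp: scale_right_distrib ac_simps)

lemma eval_fsum_scale_fun [simp]:
  "eval_fsum scale (\<lambda>w. scale e (G w)) L = scale e (eval_fsum scale G L)"
  by (induction L) (auto simp: scale_right_distrib ac_simps)

lemma eval_fsum_zero_fun [simp]: "eval_fsum scale (\<lambda>w. 0) L = 0"
  by (induction L) auto

lemma eval_fsum_map_scaled:
  "eval_fsum scale G (map (\<lambda>(d, w). (c * d, F w)) K) = scale c (eval_fsum scale (\<lambda>w. G (F w)) K)"
  by (induction K) (auto simp: scale_right_distrib)

lemma eval_fsum_tensor_mult:
  "eval_fsum scale (\<lambda>w. G (fst w) (snd w)) (tensor_mult L M) =
   eval_fsum scale (\<lambda>u. eval_fsum scale (\<lambda>v. G (fst u * fst v) (snd u * snd v)) M) L"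
proof (induction L)
  case (Cons p L)
  have "eval_fsum scale (\<lambda>w. G (fst w) (snd w)) (tensor_mult [p] M) =
        scale (fst p) (eval_fsum scale (\<lambda>v. G (fst (snd p) * fst v) (snd (snd p) * snd v)) M)"
    by (induction M) (auto simp: tensor_mult_def scale_right_distrib split: prod.split)
  moreover have "tensor_mult (p # L) M = tensor_mult [p] M @ tensor_mult L M"
    by (simp add: tensor_mult_def)
  ultimately show ?case using Cons by (cases p) simp
qed (simp add: tensor_mult_def)

lemma eval_fsum_nest_left:
  "eval_fsum scale (\<lambda>w. T (fst w) (fst (snd w)) (snd (snd w)))
     [(c * d, (x1, x2, y)). (c, (x, y)) \<leftarrow> L, (d, (x1, x2)) \<leftarrow> M x] =
   eval_fsum scale (\<lambda>u. eval_fsum scale (\<lambda>v. T (fst v) (snd v) (snd u)) (M (fst u))) L"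
proof (induction L)
  case (Cons p L)
  obtain c x y where p: "p = (c, x, y)" by (cases p) auto
  show ?case
    using Cons eval_fsum_map_scaled[of _ c "\<lambda>(x1, x2). (x1, x2, y)" "M x"] by (simp add: p split_def)
qed simp

lemma eval_fsum_nest_right:
  "eval_fsum scale (\<lambda>w. T (fst w) (fst (snd w)) (snd (snd w)))
     [(c * d, (x, y1, y2)). (c, (x, y)) \<leftarrow> L, (d, (y1, y2)) \<leftarrow> M y] =
   eval_fsum scale (\<lambda>u. eval_fsum scale (\<lambda>v. T (fst u) (fst v) (snd v)) (M (snd u))) L"
proof (induction L)
  case (Cons p L)
  obtain c x y where p: "p = (c, x, y)" by (cases p) auto
  show ?case
    using Cons eval_fsum_map_scaled[of _ c "\<lambda>(y1, y2). (x, y1, y2)" "M y"] by (simp add: p split_def)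
qed simp

lemma eval_fsum_swap:
  "eval_fsum scale (\<lambda>a. eval_fsum scale (\<lambda>b. K a b) M) L =
   eval_fsum scale (\<lambda>b. eval_fsum scale (\<lambda>a. K a b) L) M"
  by (induction L) auto

lemma eval_fsum_eq_if_diff_eq_0:
  assumes "fval R = fval (L @ fneg M)" "eval_fsum scale G R = 0"
  shows "eval_fsum scale G L = eval_fsum scale G M"
  using eval_fsum_cong_fval[OF assms(1), of G] assms(2) by (simp add: eval_fsum_fneg)

end

section \<open>Equality in tensor products\<close>

context vector_space
begin

lemma eval_fsum_tspan2:
  assumes "tspan2 sx sy R" "bilinear_map sx sy scale g"
  shows "eval_fsum scale (\<lambda>w. g (fst w) (snd w)) R = 0"
  using assms
  by induction (simp_all add: bilinear_map_def scale_right_distrib scale_minus_left ac_simps)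

lemma eval_fsum_teq2:
  assumes "teq2 sx sy L M" "bilinear_map sx sy scale g"
  shows "eval_fsum scale (\<lambda>w. g (fst w) (snd w)) L = eval_fsum scale (\<lambda>w. g (fst w) (snd w)) M"
  using assms eval_fsum_tspan2 eval_fsum_eq_if_diff_eq_0 unfolding teq2_def by blast

lemma eval_fsum_tspan3:
  assumes "tspan3 sx sy sz R" "trilinear_map sx sy sz scale g"
  shows "eval_fsum scale (\<lambda>w. g (fst w) (fst (snd w)) (snd (snd w))) R = 0"
  using assms
  by induction (simp_all add: trilinear_map_def scale_right_distrib scale_minus_left ac_simps)

lemma eval_fsum_teq3:
  assumes "teq3 sx sy sz L M" "trilinear_map sx sy sz scale g"
  shows "eval_fsum scale (\<lambda>w. g (fst w) (fst (snd w)) (snd (snd w))) L =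
         eval_fsum scale (\<lambda>w. g (fst w) (fst (snd w)) (snd (snd w))) M"
  using assms eval_fsum_tspan3 eval_fsum_eq_if_diff_eq_0 unfolding teq3_def by blast

end

lemma teq2_fval: "fval L = fval M \<Longrightarrow> teq2 sx sy L M"
  unfolding teq2_def by (rule exI[of _ "[]"]) (auto intro: tspan2.nil)

lemma teq2_refl: "teq2 sx sy L L"
  by (rule teq2_fval) simp

lemma tspan2_fsmul: "tspan2 sx sy R \<Longrightarrow> tspan2 sx sy (fsmul e R)"
proof (induction rule: tspan2.induct)
  case (add1 d x x' y) show ?case using tspan2.add1[of sx sy "e * d" x x' y] by simp
next
  case (add2 d x y y') show ?case using tspan2.add2[of sx sy "e * d" x y y'] by simp
next
  case (scl1 d c x y) show ?case using tspan2.scl1[of sx sy "e * d" c x y] by (simp add: ac_simps)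
next
  case (scl2 d x c y) show ?case using tspan2.scl2[of sx sy "e * d" x c y] by (simp add: ac_simps)
qed (auto intro: tspan2.intros)

lemma teq2_sym:
  assumes "teq2 sx sy L M"
  shows "teq2 sx sy M L"
proof -
  obtain R where "tspan2 sx sy R" "fval R = fval (L @ fneg M)"
    using assms unfolding teq2_def by blast
  then show ?thesis
    unfolding teq2_def by (intro exI[of _ "fsmul (- 1) R"]) (auto simp: tspan2_fsmul fun_eq_iff)
qed

lemma teq2_append:
  assumes "teq2 sx sy L L'" "teq2 sx sy M M'"
  shows "teq2 sx sy (L @ M) (L' @ M')"
proof -
  obtain R R' where "tspan2 sx sy R" "fval R = fval (L @ fneg L')"
    and "tspan2 sx sy R'" "fval R' = fval (M @ fneg M')"
    using assms unfolding teq2_def by blast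
  then show ?thesis
    unfolding teq2_def by (intro exI[of _ "R @ R'"]) (auto intro: tspan2.app simp: fun_eq_iff)
qed

lemma teq2_trans [trans]:
  assumes "teq2 sx sy L M" "teq2 sx sy M N"
  shows "teq2 sx sy L N"
proof -
  obtain R R' where "tspan2 sx sy R" "fval R = fval (L @ fneg M)"
    and "tspan2 sx sy R'" "fval R' = fval (M @ fneg N)"
    using assms unfolding teq2_def by blast
  then show ?thesis
    unfolding teq2_def by (intro exI[of _ "R @ R'"]) (auto intro: tspan2.app simp: fun_eq_iff)
qed

lemma teq2_fsmul:
  assumes "teq2 sx sy L M"
  shows "teq2 sx sy (fsmul e L) (fsmul e M)"
proof -
  obtain R where "tspan2 sx sy R" "fval R = fval (L @ fneg M)"
    using assms unfolding teq2_def by blast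
  then show ?thesis
    unfolding teq2_def
    by (intro exI[of _ "fsmul e R"]) (simp add: tspan2_fsmul fun_eq_iff right_diff_distrib)
qed

lemma tspan2_map:
  assumes "\<And>x x'. f (x + x') = f x + f x'" "\<And>c x. f (sx c x) = sx' c (f x)"
    and "\<And>y y'. g (y + y') = g y + g y'" "\<And>c y. g (sy c y) = sy' c (g y)"
  shows "tspan2 sx sy R \<Longrightarrow> tspan2 sx' sy' (map (apsnd (map_prod f g)) R)"
proof (induction rule: tspan2.induct)
  case (add1 d x x' y) show ?case using tspan2.add1[of sx' sy' d "f x" "f x'" "g y"] by (simp add: assms)
next
  case (add2 d x y y') show ?case using tspan2.add2[of sx' sy' d "f x" "g y" "g y'"] by (simp add: assms)
next
  case (scl1 d c x y) show ?case using tspan2.scl1[of sx' sy' d c "f x" "g y"] by (simp add: assms)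
next
  case (scl2 d x c y) show ?case using tspan2.scl2[of sx' sy' d "f x" c "g y"] by (simp add: assms)
qed (auto intro: tspan2.intros)

lemma fval_map_apsnd: "fval (map (apsnd h) L) w = eval_fsum (*) (\<lambda>w'. if h w' = w then 1 else 0) L"
  for L :: "('k::ring_1 \<times> 'w) list"
  by (induction L) auto

lemma fval_map_apsnd_cong:
  fixes L M :: "('k::field \<times> 'w) list"
  assumes "fval L = fval M"
  shows "fval (map (apsnd h) L) = fval (map (apsnd h) M)"
proof -
  interpret scalar_field: vector_space "(*) :: 'k \<Rightarrow> 'k \<Rightarrow> 'k"
    by unfold_locales (auto simp: algebra_simps)
  show ?thesis
    unfolding fun_eq_iff fval_map_apsnd using scalar_field.eval_fsum_cong_fval[OF assms] by blast
qed

lemma teq2_map: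
  assumes "\<And>x x'. f (x + x') = f x + f x'" "\<And>c x. f (sx c x) = sx' c (f x)"
    and "\<And>y y'. g (y + y') = g y + g y'" "\<And>c y. g (sy c y) = sy' c (g y)"
    and "teq2 sx sy L M"
  shows "teq2 sx' sy' (map (apsnd (map_prod f g)) L) (map (apsnd (map_prod f g)) M)"
proof -
  obtain R where R: "tspan2 sx sy R" "fval R = fval (L @ fneg M)"
    using assms(5) unfolding teq2_def by blast
  have "map (apsnd (map_prod f g)) (L @ fneg M) =
      map (apsnd (map_prod f g)) L @ fneg (map (apsnd (map_prod f g)) M)"
    by (induction M) auto
  then show ?thesis
    using tspan2_map[OF assms(1-4) R(1)] fval_map_apsnd_cong[OF R(2), of "map_prod f g"]
    unfolding teq2_def by metis
qed

lemma tensor_mult_Cons: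
  "tensor_mult ((c, (x, y)) # L) M =
     fsmul c (map (apsnd (map_prod ((*) x) ((*) y))) M) @ tensor_mult L M"
  by (induction M) (auto simp: tensor_mult_def)

lemma tensor_mult_Nil_left [simp]: "tensor_mult [] M = []"
  and tensor_mult_Nil_right [simp]: "tensor_mult L [] = []"
  by (simp_all add: tensor_mult_def)

lemma tensor_mult_singleton_right:
  "tensor_mult L [(d, (x', y'))] = fsmul d (map (apsnd (map_prod (\<lambda>x. x * x') (\<lambda>y. y * y'))) L)"
  for L :: "('k::comm_ring \<times> ('a::times \<times> 'a)) list"
  by (induction L) (auto simp: tensor_mult_def mult.commute)

lemma fval_tensor_mult_Cons_right:
  "fval (tensor_mult L (q # M)) = fval (tensor_mult L [q] @ tensor_mult L M)"
  by (cases q, induction L) (auto simp: tensor_mult_def fun_eq_iff algebra_simps)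

lemma teq2_tensor_mult_right:
  fixes L :: "('k::field \<times> ('a::ring \<times> 'a)) list"
  assumes "\<And>c a b. sx c (a * b) = a * sx c b" "\<And>c a b. sy c (a * b) = a * sy c b"
    and "teq2 sx sy M M'"
  shows "teq2 sx sy (tensor_mult L M) (tensor_mult L M')"
proof (induction L)
  case (Cons p L)
  obtain c x y where p: "p = (c, x, y)" by (cases p) auto
  have "teq2 sx sy (map (apsnd (map_prod ((*) x) ((*) y))) M) (map (apsnd (map_prod ((*) x) ((*) y))) M')"
    by (rule teq2_map[OF _ _ _ _ assms(3)]) (auto simp: distrib_left assms(1,2))
  then show ?case unfolding p tensor_mult_Cons by (intro teq2_append teq2_fsmul Cons)
qed (simp add: teq2_refl)

lemma teq2_tensor_mult_left:
  fixes M :: "('k::field \<times> ('a::ring \<times> 'a)) list"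
  assumes "\<And>c a b. sx c (a * b) = sx c a * b" "\<And>c a b. sy c (a * b) = sy c a * b"
    and "teq2 sx sy L L'"
  shows "teq2 sx sy (tensor_mult L M) (tensor_mult L' M)"
proof (induction M)
  case (Cons q M)
  obtain d x' y' where q: "q = (d, x', y')" by (cases q) auto
  have "teq2 sx sy (map (apsnd (map_prod (\<lambda>x. x * x') (\<lambda>y. y * y'))) L)
                   (map (apsnd (map_prod (\<lambda>x. x * x') (\<lambda>y. y * y'))) L')"
    by (rule teq2_map[OF _ _ _ _ assms(3)]) (auto simp: distrib_right assms(1,2))
  then have "teq2 sx sy (tensor_mult L [q] @ tensor_mult L M) (tensor_mult L' [q] @ tensor_mult L' M)"
    unfolding q tensor_mult_singleton_right by (intro teq2_append teq2_fsmul Cons)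
  then show ?case
    by (meson fval_tensor_mult_Cons_right teq2_fval teq2_sym teq2_trans)
qed (simp add: teq2_refl)

lemma teq2I: "tspan2 sx sy (L @ fneg M) \<Longrightarrow> teq2 sx sy L M"
  unfolding teq2_def by blast

lemma (in vector_space) teq2_collapse_left:
  "teq2 sx scale (map (\<lambda>(c, y, z). (c, sx (\<phi> y) x0, z)) L)
     [(1, (x0, eval_fsum scale (\<lambda>w. scale (\<phi> (fst w)) (snd w)) L))]"
proof (induction L)
  case Nil
  have "tspan2 sx scale [(1, (x0, 0 + 0)), (- 1, (x0, 0)), (- 1, (x0, 0))]"
    by (rule tspan2.add2)
  then show ?case
    unfolding teq2_def
    by (intro exI[of _ "[(1, (x0, 0)), (- 1, (x0, 0)), (- 1, (x0, 0))]"]) (simp add: fun_eq_iff)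
next
  case (Cons p L)
  obtain c y z where p: "p = (c, y, z)" by (cases p) auto
  let ?s = "eval_fsum scale (\<lambda>w. scale (\<phi> (fst w)) (snd w)) L"
  have "teq2 sx scale [(c, (sx (\<phi> y) x0, z))] [(\<phi> y * c, (x0, z))]"
    by (rule teq2I) (simp add: tspan2.scl1)
  also have "teq2 sx scale \<dots> [(1, (x0, scale (\<phi> y * c) z))]"
    by (rule teq2_sym, rule teq2I) (use tspan2.scl2[of sx scale 1 x0 "\<phi> y * c" z] in simp)
  finally have "teq2 sx scale (map (\<lambda>(c, y, z). (c, sx (\<phi> y) x0, z)) (p # L))
      [(1, (x0, scale (\<phi> y * c) z)), (1, (x0, ?s))]"
    using teq2_append[OF _ Cons] p by fastforce
  also have "teq2 sx scale \<dots> [(1, (x0, scale (\<phi> y * c) z + ?s))]"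
    by (rule teq2_sym, rule teq2I) (use tspan2.add2[of sx scale 1 x0 "scale (\<phi> y * c) z" ?s] in simp)
  finally show ?case by (simp add: p mult.commute)
qed

section \<open>Hopf algebras\<close>

locale hopf_algebra =
  fixes A :: "('k::field, 'a::ring_1) hopf_str"
  assumes hopf: "is_hopf_algebra A"
begin

abbreviation ev :: "('w \<Rightarrow> 'a) \<Rightarrow> ('k \<times> 'w) list \<Rightarrow> 'a" where
  "ev \<equiv> eval_fsum (hsc A)"

sublocale vector_space "hsc A"
  using hopf unfolding is_hopf_algebra_def by blast

lemma scale_mult_left [simp]: "hsc A c a * b = hsc A c (a * b)"
  and scale_mult_right [simp]: "a * hsc A c b = hsc A c (a * b)"
  using hopf unfolding is_hopf_algebra_def by metis+

lemma antip_add [simp]: "antip A (a + b) = antip A a + antip A b"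
  and antip_scale [simp]: "antip A (hsc A c a) = hsc A c (antip A a)"
  and counit_add [simp]: "counit A (a + b) = counit A a + counit A b"
  and counit_scale [simp]: "counit A (hsc A c a) = c * counit A a"
  and counit_mult [simp]: "counit A (a * b) = counit A a * counit A b"
  and counit_one [simp]: "counit A 1 = 1"
  using hopf unfolding is_hopf_algebra_def by blast+

lemma antip_zero [simp]: "antip A 0 = 0"
  using antip_add[of 0 0] by simp

lemma comul_add: "teq2 (hsc A) (hsc A) (comul A (a + b)) (comul A a @ comul A b)"
  and comul_scale: "teq2 (hsc A) (hsc A) (comul A (hsc A c a)) (fsmul c (comul A a))"
  and comul_mult: "teq2 (hsc A) (hsc A) (comul A (a * b)) (tensor_mult (comul A a) (comul A b))"
  using hopf unfolding is_hopf_algebra_def tensor_mult_def fsmul_def by auto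

lemma coassoc: "teq3 (hsc A) (hsc A) (hsc A)
    [(c * d, (x1, x2, y)). (c, (x, y)) \<leftarrow> comul A a, (d, (x1, x2)) \<leftarrow> comul A x]
    [(c * d, (x, y1, y2)). (c, (x, y)) \<leftarrow> comul A a, (d, (y1, y2)) \<leftarrow> comul A y]"
  using hopf unfolding is_hopf_algebra_def by blast

lemma counit_left: "ev (\<lambda>w. hsc A (counit A (fst w)) (snd w)) (comul A a) = a"
  and counit_right: "ev (\<lambda>w. hsc A (counit A (snd w)) (fst w)) (comul A a) = a"
  and antip_left: "ev (\<lambda>w. antip A (fst w) * snd w) (comul A a) = hsc A (counit A a) 1"
  and antip_right: "ev (\<lambda>w. fst w * antip A (snd w)) (comul A a) = hsc A (counit A a) 1"
  using hopf unfolding is_hopf_algebra_def eval_fsum_pairs by simp_all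

lemma ev_mult_left: "ev G L * b = ev (\<lambda>w. G w * b) L"
  by (rule eval_fsum_linear) (auto simp: distrib_right)

lemma ev_mult_right: "b * ev G L = ev (\<lambda>w. b * G w) L"
  by (rule eval_fsum_linear) (auto simp: distrib_left)

lemma antip_ev: "antip A (ev G L) = ev (\<lambda>w. antip A (G w)) L"
  by (rule eval_fsum_linear) auto

lemma eval_coassoc:
  assumes "vector_space sc" "trilinear_map (hsc A) (hsc A) (hsc A) sc g"
  shows "eval_fsum sc (\<lambda>u. eval_fsum sc (\<lambda>v. g (fst v) (snd v) (snd u)) (comul A (fst u)))
           (comul A a) =
         eval_fsum sc (\<lambda>u. eval_fsum sc (\<lambda>v. g (fst u) (fst v) (snd v)) (comul A (snd u)))
           (comul A a)"
  using vector_space.eval_fsum_teq3[OF assms(1) coassoc assms(2)]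
  unfolding module.eval_fsum_nest_left[OF assms(1)[folded module_iff_vector_space]]
    module.eval_fsum_nest_right[OF assms(1)[folded module_iff_vector_space]] .

text \<open>A bilinear map \<open>F\<close> on A stands for a linear map on \<open>A \<otimes> A\<close>; \<open>tensor_conv\<close> is the
  convolution product of such maps for the coalgebra structure of \<open>A \<otimes> A\<close>.\<close>

definition tensor_conv :: "('a \<Rightarrow> 'a \<Rightarrow> 'a) \<Rightarrow> ('a \<Rightarrow> 'a \<Rightarrow> 'a) \<Rightarrow> 'a \<Rightarrow> 'a \<Rightarrow> 'a" where
  "tensor_conv F G x y =
     ev (\<lambda>u. ev (\<lambda>v. F (fst u) (fst v) * G (snd u) (snd v)) (comul A y)) (comul A x)"

definition tensor_unit :: "'a \<Rightarrow> 'a \<Rightarrow> 'a" where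
  "tensor_unit x y = hsc A (counit A x * counit A y) 1"

lemma tensor_conv_assoc:
  assumes F: "bilinear_map (hsc A) (hsc A) (hsc A) F"
    and G: "bilinear_map (hsc A) (hsc A) (hsc A) G"
    and K: "bilinear_map (hsc A) (hsc A) (hsc A) K"
  shows "tensor_conv (tensor_conv F G) K x y = tensor_conv F (tensor_conv G K) x y"
proof -
  define T where "T a b c =
    ev (\<lambda>v. ev (\<lambda>v'. F a (fst v') * G b (snd v') * K c (snd v)) (comul A (fst v))) (comul A y)" for a b c
  have T_trilinear: "trilinear_map (hsc A) (hsc A) (hsc A) (hsc A) T"
    unfolding trilinear_map_def T_def
    by (simp add: bilinear_mapD[OF F] bilinear_mapD[OF G] bilinear_mapD[OF K] distrib_left distrib_right)
  have T_coassoc: "T a b c =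
    ev (\<lambda>v. ev (\<lambda>v'. F a (fst v) * G b (fst v') * K c (snd v')) (comul A (snd v))) (comul A y)" for a b c
    unfolding T_def
    by (rule eval_coassoc[OF vector_space_axioms])
      (simp add: trilinear_map_def bilinear_mapD[OF F] bilinear_mapD[OF G] bilinear_mapD[OF K]
        distrib_left distrib_right)
  have "tensor_conv (tensor_conv F G) K x y =
      ev (\<lambda>u. ev (\<lambda>u'. T (fst u') (snd u') (snd u)) (comul A (fst u))) (comul A x)"
    unfolding tensor_conv_def T_def
    by (simp add: ev_mult_left) (intro eval_fsum_cong eval_fsum_swap)
  also have "\<dots> = ev (\<lambda>u. ev (\<lambda>u'. T (fst u) (fst u') (snd u')) (comul A (snd u))) (comul A x)"
    by (rule eval_coassoc[OF vector_space_axioms T_trilinear])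
  also have "\<dots> = tensor_conv F (tensor_conv G K) x y"
    unfolding tensor_conv_def T_coassoc
    by (simp add: ev_mult_right mult.assoc) (intro eval_fsum_cong eval_fsum_swap)
  finally show ?thesis .
qed

lemma bilinear_ev_left: "bilinear_map (hsc A) (hsc A) (hsc A) F \<Longrightarrow> F (ev G L) b = ev (\<lambda>w. F (G w) b) L"
  by (rule eval_fsum_linear) (simp_all add: bilinear_mapD)

lemma bilinear_ev_right: "bilinear_map (hsc A) (hsc A) (hsc A) F \<Longrightarrow> F a (ev G L) = ev (\<lambda>w. F a (G w)) L"
  by (rule eval_fsum_linear) (simp_all add: bilinear_mapD)

lemma tensor_conv_unit_right:
  assumes F: "bilinear_map (hsc A) (hsc A) (hsc A) F"
  shows "tensor_conv F tensor_unit x y = F x y"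
proof -
  have "tensor_conv F tensor_unit x y =
      ev (\<lambda>u. hsc A (counit A (snd u)) (F (fst u) (ev (\<lambda>v. hsc A (counit A (snd v)) (fst v)) (comul A y))))
        (comul A x)"
    by (simp add: tensor_conv_def tensor_unit_def bilinear_ev_right[OF F] bilinear_mapD[OF F]
        flip: eval_fsum_scale_fun)
  also have "\<dots> = ev (\<lambda>u. hsc A (counit A (snd u)) (F (fst u) y)) (comul A x)"
    by (simp add: counit_right)
  also have "\<dots> = F (ev (\<lambda>u. hsc A (counit A (snd u)) (fst u)) (comul A x)) y"
    by (simp add: bilinear_ev_left[OF F] bilinear_mapD[OF F])
  also have "\<dots> = F x y"
    by (simp add: counit_right)
  finally show ?thesis .
qed

lemma tensor_conv_unit_left:
  assumes F: "bilinear_map (hsc A) (hsc A) (hsc A) F"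
  shows "tensor_conv tensor_unit F x y = F x y"
proof -
  have "tensor_conv tensor_unit F x y =
      ev (\<lambda>u. hsc A (counit A (fst u)) (F (snd u) (ev (\<lambda>v. hsc A (counit A (fst v)) (snd v)) (comul A y))))
        (comul A x)"
    by (simp add: tensor_conv_def tensor_unit_def bilinear_ev_right[OF F] bilinear_mapD[OF F]
        flip: eval_fsum_scale_fun)
  also have "\<dots> = ev (\<lambda>u. hsc A (counit A (fst u)) (F (snd u) y)) (comul A x)"
    by (simp add: counit_left)
  also have "\<dots> = F (ev (\<lambda>u. hsc A (counit A (fst u)) (snd u)) (comul A x)) y"
    by (simp add: bilinear_ev_left[OF F] bilinear_mapD[OF F])
  also have "\<dots> = F x y"
    by (simp add: counit_left)
  finally show ?thesis .
qed

lemma bilinear_antip_mult: "bilinear_map (hsc A) (hsc A) (hsc A) (\<lambda>x y. antip A (x * y))"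
  and bilinear_mult: "bilinear_map (hsc A) (hsc A) (hsc A) (*)"
  and bilinear_antip_mult_swap: "bilinear_map (hsc A) (hsc A) (hsc A) (\<lambda>x y. antip A y * antip A x)"
  by (simp_all add: bilinear_map_def distrib_left distrib_right)

lemma tensor_conv_antip_mult_mult: "tensor_conv (\<lambda>x y. antip A (x * y)) (*) = tensor_unit"
proof (intro ext)
  fix x y
  have "tensor_unit x y = ev (\<lambda>w. antip A (fst w) * snd w) (comul A (x * y))"
    by (simp add: tensor_unit_def antip_left)
  also have "\<dots> = ev (\<lambda>w. antip A (fst w) * snd w) (tensor_mult (comul A x) (comul A y))"
    by (rule eval_fsum_teq2[OF comul_mult]) (simp add: bilinear_map_def distrib_left distrib_right)
  also have "\<dots> = tensor_conv (\<lambda>x y. antip A (x * y)) (*) x y"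
    using eval_fsum_tensor_mult[of "\<lambda>p q. antip A p * q"] by (simp add: tensor_conv_def)
  finally show "tensor_conv (\<lambda>x y. antip A (x * y)) (*) x y = tensor_unit x y" by simp
qed

lemma tensor_conv_mult_antip_mult_swap: "tensor_conv (*) (\<lambda>x y. antip A y * antip A x) = tensor_unit"
proof (intro ext)
  fix x y
  have "tensor_conv (*) (\<lambda>x y. antip A y * antip A x) x y =
      ev (\<lambda>u. fst u * ev (\<lambda>v. fst v * antip A (snd v)) (comul A y) * antip A (snd u)) (comul A x)"
    by (simp add: tensor_conv_def ev_mult_left ev_mult_right mult.assoc)
  also have "\<dots> = tensor_unit x y"
    by (simp add: antip_right tensor_unit_def mult.commute)
  finally show "tensor_conv (*) (\<lambda>x y. antip A y * antip A x) x y = tensor_unit x y" .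
qed

text \<open>Both sides are convolution inverses of the multiplication.\<close>

lemma antip_mult: "antip A (x * y) = antip A y * antip A x"
proof -
  let ?SM = "\<lambda>x y. antip A (x * y)" and ?MS = "\<lambda>x y. antip A y * antip A x"
  have "antip A (x * y) = tensor_conv ?SM tensor_unit x y"
    by (simp add: tensor_conv_unit_right[OF bilinear_antip_mult])
  also have "\<dots> = tensor_conv ?SM (tensor_conv (*) ?MS) x y"
    by (simp only: tensor_conv_mult_antip_mult_swap)
  also have "\<dots> = tensor_conv (tensor_conv ?SM (*)) ?MS x y"
    by (simp add: tensor_conv_assoc bilinear_antip_mult bilinear_mult bilinear_antip_mult_swap)
  also have "\<dots> = tensor_conv tensor_unit ?MS x y"
    by (simp only: tensor_conv_antip_mult_mult)
  also have "\<dots> = antip A y * antip A x"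
    by (simp add: tensor_conv_unit_left[OF bilinear_antip_mult_swap])
  finally show ?thesis .
qed

end

locale hopf_hom = src: hopf_algebra A + tgt: hopf_algebra B
  for A :: "('k::field, 'a::ring_1) hopf_str" and B :: "('k, 'b::ring_1) hopf_str" +
  fixes f :: "'a \<Rightarrow> 'b"
  assumes hom: "is_hopf_map A B f"
begin

lemma hom_add [simp]: "f (x + y) = f x + f y"
  and hom_scale [simp]: "f (hsc A c x) = hsc B c (f x)"
  and hom_mult [simp]: "f (x * y) = f x * f y"
  and hom_one [simp]: "f 1 = 1"
  and hom_counit [simp]: "counit B (f x) = counit A x"
  using hom unfolding is_hopf_map_def by blast+

lemma hom_comul: "teq2 (hsc B) (hsc B) (comul B (f x)) (map (apsnd (map_prod f f)) (comul A x))"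
  using hom unfolding is_hopf_map_def by (simp add: apsnd_def map_prod_def case_prod_beta')

lemma hom_zero [simp]: "f 0 = 0"
  using hom_add[of 0 0] by simp

lemma hom_ev: "f (src.ev G L) = tgt.ev (\<lambda>w. f (G w)) L"
  by (rule eval_fsum_linear) simp_all

lemma hom_convolution_antip_right:
  "tgt.ev (\<lambda>v. f (fst v) * antip B (f (snd v))) (comul A a) = hsc B (counit A a) 1"
proof -
  have "tgt.ev (\<lambda>v. f (fst v) * antip B (f (snd v))) (comul A a) =
        tgt.ev (\<lambda>v. fst v * antip B (snd v)) (map (apsnd (map_prod f f)) (comul A a))"
    by (simp add: eval_fsum_map_apsnd)
  also have "\<dots> = tgt.ev (\<lambda>v. fst v * antip B (snd v)) (comul B (f a))"
    by (rule tgt.eval_fsum_teq2[OF teq2_sym[OF hom_comul]])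
      (simp add: bilinear_map_def distrib_left distrib_right)
  finally show ?thesis by (simp add: tgt.antip_right)
qed

text \<open>Both sides are convolution inverses of \<open>f\<close> in \<open>Hom(A, B)\<close>.\<close>

lemma hom_antip: "f (antip A x) = antip B (f x)"
proof -
  have "f (antip A x) = f (antip A (src.ev (\<lambda>u. hsc A (counit A (snd u)) (fst u)) (comul A x)))"
    by (simp add: src.counit_right)
  also have "\<dots> = tgt.ev (\<lambda>u. hsc B (counit A (snd u)) (f (antip A (fst u)))) (comul A x)"
    by (simp add: src.antip_ev hom_ev)
  also have "\<dots> = tgt.ev (\<lambda>u. tgt.ev (\<lambda>v. f (antip A (fst u)) * f (fst v) * antip B (f (snd v)))
      (comul A (snd u))) (comul A x)"
    by (simp add: hom_convolution_antip_right mult.assoc flip: tgt.ev_mult_right)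
  also have "\<dots> = tgt.ev (\<lambda>u. tgt.ev (\<lambda>v. f (antip A (fst v)) * f (snd v) * antip B (f (snd u)))
      (comul A (fst u))) (comul A x)"
    by (rule src.eval_coassoc[OF tgt.vector_space_axioms, symmetric])
      (simp add: trilinear_map_def distrib_left distrib_right)
  also have "\<dots> = tgt.ev (\<lambda>u. hsc B (counit A (fst u)) (antip B (f (snd u)))) (comul A x)"
    by (simp add: src.antip_left flip: tgt.ev_mult_left hom_ev hom_mult)
  also have "\<dots> = antip B (f (src.ev (\<lambda>u. hsc A (counit A (fst u)) (snd u)) (comul A x)))"
    by (simp add: tgt.antip_ev hom_ev)
  also have "\<dots> = antip B (f x)"
    by (simp add: src.counit_left)
  finally show ?thesis .
qed

end

section \<open>Hopf subalgebras and the Hopf center\<close>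

lemma center_commute: "z \<in> center \<Longrightarrow> z * x = x * z"
  unfolding center_def by blast

lemma mult_mem_center:
  assumes "u \<in> center" "v \<in> center"
  shows "u * v \<in> center"
proof -
  have "u * v * x = x * (u * v)" for x
    using center_commute[OF assms(1), of x] center_commute[OF assms(2), of x]
    by (metis mult.assoc)
  then show ?thesis
    unfolding center_def by blast
qed

lemma image_subset_center:
  assumes mult: "\<And>x y. f (x * y) = f x * f y" and surj: "surj f" and C: "C \<subseteq> center"
  shows "f ` C \<subseteq> center"
proof
  fix b assume "b \<in> f ` C"
  then obtain z where z: "b = f z" "z \<in> C" by blast
  have "b * y = y * b" for y
  proof -
    obtain x where "y = f x"
      using surj by (metis surjD)
    then show ?thesis
      using center_commute[of z x] C z by (simp add: subsetD flip: mult)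
  qed
  then show "b \<in> center"
    unfolding center_def by blast
qed

context hopf_algebra
begin

definition comul_preimage :: "'a set \<Rightarrow> 'a set" where
  "comul_preimage V =
     {x. \<exists>L. (\<forall>(c, (y, z)) \<in> set L. y \<in> V \<and> z \<in> V) \<and> teq2 (hsc A) (hsc A) (comul A x) L}"

lemma is_hopf_subalgebraI:
  assumes "subspace C" "1 \<in> C" "\<And>x y. x \<in> C \<Longrightarrow> y \<in> C \<Longrightarrow> x * y \<in> C"
    "C \<subseteq> comul_preimage C" "\<And>x. x \<in> C \<Longrightarrow> antip A x \<in> C"
  shows "is_hopf_subalgebra A C"
  using assms unfolding is_hopf_subalgebra_def comul_preimage_def by blast

lemma is_hopf_subalgebraD:
  assumes "is_hopf_subalgebra A C"
  shows "subspace C" "1 \<in> C" "x \<in> C \<Longrightarrow> y \<in> C \<Longrightarrow> x * y \<in> C"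
    "C \<subseteq> comul_preimage C" "x \<in> C \<Longrightarrow> antip A x \<in> C"
  using assms unfolding is_hopf_subalgebra_def comul_preimage_def by blast+

lemma is_hopf_subalgebra_UNIV: "is_hopf_subalgebra A UNIV"
proof -
  have "UNIV \<subseteq> comul_preimage UNIV"
    unfolding comul_preimage_def by (auto intro!: exI[of _ "comul A _"] teq2_refl)
  then show ?thesis
    by (intro is_hopf_subalgebraI subspace_UNIV) simp_all
qed

lemma comul_zero: "teq2 (hsc A) (hsc A) (comul A 0) []"
proof -
  have "teq2 (hsc A) (hsc A) (comul A 0) (fsmul 0 (comul A 0))"
    using comul_scale[of 0 0] by simp
  also have "teq2 (hsc A) (hsc A) \<dots> []"
    by (rule teq2_fval) (simp add: fun_eq_iff)
  finally show ?thesis .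
qed

lemma subspace_comul_preimage: "subspace (comul_preimage V)"
proof (rule subspaceI)
  show "0 \<in> comul_preimage V"
    unfolding comul_preimage_def by (intro CollectI exI[of _ "[]"]) (simp add: comul_zero)
next
  fix x y assume "x \<in> comul_preimage V" "y \<in> comul_preimage V"
  then obtain L M where "\<forall>(c, (y, z)) \<in> set L. y \<in> V \<and> z \<in> V" "teq2 (hsc A) (hsc A) (comul A x) L"
    and "\<forall>(c, (y, z)) \<in> set M. y \<in> V \<and> z \<in> V" "teq2 (hsc A) (hsc A) (comul A y) M"
    unfolding comul_preimage_def by blast
  then show "x + y \<in> comul_preimage V"
    unfolding comul_preimage_def
    by (intro CollectI exI[of _ "L @ M"]) (auto intro: teq2_trans[OF comul_add teq2_append])
next
  fix c x assume "x \<in> comul_preimage V"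
  then obtain L where "\<forall>(c, (y, z)) \<in> set L. y \<in> V \<and> z \<in> V" "teq2 (hsc A) (hsc A) (comul A x) L"
    unfolding comul_preimage_def by blast
  moreover from this(2) have "teq2 (hsc A) (hsc A) (comul A (hsc A c x)) (fsmul c L)"
    by (rule teq2_trans[OF comul_scale teq2_fsmul])
  ultimately show "hsc A c x \<in> comul_preimage V"
    unfolding comul_preimage_def by (intro CollectI exI[of _ "fsmul c L"] conjI) (auto simp: fsmul_def)
qed

lemma comul_preimage_mono: "V \<subseteq> W \<Longrightarrow> comul_preimage V \<subseteq> comul_preimage W"
  unfolding comul_preimage_def by fastforce

lemma mult_mem_comul_preimage:
  assumes "u \<in> comul_preimage V" "v \<in> comul_preimage W"
  shows "u * v \<in> comul_preimage {a * b | a b. a \<in> V \<and> b \<in> W}"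
proof -
  obtain L where L: "\<forall>(c, (y, z)) \<in> set L. y \<in> V \<and> z \<in> V" "teq2 (hsc A) (hsc A) (comul A u) L"
    using assms(1) unfolding comul_preimage_def by blast
  obtain M where M: "\<forall>(c, (y, z)) \<in> set M. y \<in> W \<and> z \<in> W" "teq2 (hsc A) (hsc A) (comul A v) M"
    using assms(2) unfolding comul_preimage_def by blast
  have "teq2 (hsc A) (hsc A) (comul A (u * v)) (tensor_mult (comul A u) (comul A v))"
    by (rule comul_mult)
  also have "teq2 (hsc A) (hsc A) \<dots> (tensor_mult L (comul A v))"
    by (rule teq2_tensor_mult_left[OF _ _ L(2)]) simp_all
  also have "teq2 (hsc A) (hsc A) \<dots> (tensor_mult L M)"
    by (rule teq2_tensor_mult_right[OF _ _ M(2)]) simp_all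
  finally have "teq2 (hsc A) (hsc A) (comul A (u * v)) (tensor_mult L M)" .
  moreover have "y \<in> {a * b | a b. a \<in> V \<and> b \<in> W} \<and> z \<in> {a * b | a b. a \<in> V \<and> b \<in> W}"
    if "(c, y, z) \<in> set (tensor_mult L M)" for c y z
    using that L(1) M(1) unfolding tensor_mult_def by fastforce
  ultimately show ?thesis
    unfolding comul_preimage_def by blast
qed

lemma subspace_center: "subspace center"
  unfolding center_def by (rule subspaceI) (auto simp: distrib_left distrib_right)

lemma span_mult_closed:
  assumes "\<And>u v. u \<in> G \<Longrightarrow> v \<in> G \<Longrightarrow> u * v \<in> span G"
    and "x \<in> span G" "y \<in> span G"
  shows "x * y \<in> span G"
proof -
  have generator_mult: "u * y \<in> span G" if "u \<in> G" for u
    using assms(3)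
    by (induction rule: span_induct)
      (auto simp: assms(1) that subspace_def distrib_left span_zero span_add span_scale)
  show ?thesis
    using assms(2)
    by (induction rule: span_induct)
      (auto simp: generator_mult subspace_def distrib_right span_zero span_add span_scale)
qed

lemma span_antip_closed:
  assumes "\<And>u. u \<in> G \<Longrightarrow> antip A u \<in> span G" and "x \<in> span G"
  shows "antip A x \<in> span G"
  using assms(2)
proof (induction rule: span_induct)
  case base
  show ?case by (auto simp: subspace_def span_zero span_add span_scale)
qed (rule assms(1))

lemma is_central_hopf_subalgebraI:
  assumes "subspace C" "1 \<in> C" "\<And>x y. x \<in> C \<Longrightarrow> y \<in> C \<Longrightarrow> x * y \<in> C"
    "C \<subseteq> comul_preimage C" "\<And>x. x \<in> C \<Longrightarrow> antip A x \<in> C" "C \<subseteq> center"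
  shows "is_central_hopf_subalgebra A C"
  unfolding is_central_hopf_subalgebra_def using is_hopf_subalgebraI[OF assms(1-5)] assms(6) by blast

lemma is_central_hopf_subalgebraD:
  assumes "is_central_hopf_subalgebra A C"
  shows "subspace C" "1 \<in> C" "x \<in> C \<Longrightarrow> y \<in> C \<Longrightarrow> x * y \<in> C"
    "C \<subseteq> comul_preimage C" "x \<in> C \<Longrightarrow> antip A x \<in> C" "C \<subseteq> center"
  using assms is_hopf_subalgebraD unfolding is_central_hopf_subalgebra_def by blast+

lemma is_central_hopf_subalgebra_span_mult:
  assumes D1: "is_central_hopf_subalgebra A D1" and D2: "is_central_hopf_subalgebra A D2"
  shows "is_central_hopf_subalgebra A (span {u * v | u v. u \<in> D1 \<and> v \<in> D2})"
proof -
  let ?G = "{u * v | u v. u \<in> D1 \<and> v \<in> D2}"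
  note D1 = is_central_hopf_subalgebraD[OF D1] and D2 = is_central_hopf_subalgebraD[OF D2]
  have G_span: "?G \<subseteq> span ?G"
    by (rule span_superset)
  have "1 \<in> ?G"
    using D1(2) D2(2) by (metis (mono_tags, lifting) mem_Collect_eq mult_1)
  then have one: "1 \<in> span ?G"
    using G_span by blast
  have "p * q \<in> ?G" if "p \<in> ?G" "q \<in> ?G" for p q
  proof -
    obtain u v u' v' where uv: "p = u * v" "q = u' * v'" "u \<in> D1" "v \<in> D2" "u' \<in> D1" "v' \<in> D2"
      using \<open>p \<in> ?G\<close> \<open>q \<in> ?G\<close> by blast
    moreover have "v * u' = u' * v"
      using center_commute[of v u'] D2(6) uv(4) by blast
    ultimately have "p * q = (u * u') * (v * v')"
      by (metis mult.assoc)
    then show ?thesis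
      using D1(3) D2(3) uv by blast
  qed
  then have mult: "x * y \<in> span ?G" if "x \<in> span ?G" "y \<in> span ?G" for x y
    using span_mult_closed[OF _ that] G_span by blast
  have "antip A p \<in> ?G" if "p \<in> ?G" for p
  proof -
    obtain u v where uv: "p = u * v" "u \<in> D1" "v \<in> D2"
      using \<open>p \<in> ?G\<close> by blast
    moreover have "antip A v * antip A u = antip A u * antip A v"
      using center_commute[of "antip A v"] D2(5,6) uv(3) by blast
    ultimately have "antip A p = antip A u * antip A v"
      by (simp add: antip_mult)
    then show ?thesis
      using D1(5) D2(5) uv by blast
  qed
  then have antip: "antip A x \<in> span ?G" if "x \<in> span ?G" for x
    using span_antip_closed[OF _ that] G_span by blast
  have "?G \<subseteq> comul_preimage ?G"
    using D1(4) D2(4) mult_mem_comul_preimage by blast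
  then have "?G \<subseteq> comul_preimage (span ?G)"
    using G_span comul_preimage_mono by blast
  then have comul: "span ?G \<subseteq> comul_preimage (span ?G)"
    by (rule span_minimal[OF _ subspace_comul_preimage])
  have "?G \<subseteq> center"
    using D1(6) D2(6) mult_mem_center by blast
  then have "span ?G \<subseteq> center"
    by (rule span_minimal[OF _ subspace_center])
  then show ?thesis
    by (intro is_central_hopf_subalgebraI subspace_span one mult comul antip)
qed

lemma central_hopf_subalgebras_directed:
  assumes "is_central_hopf_subalgebra A D1" "is_central_hopf_subalgebra A D2"
  obtains D where "is_central_hopf_subalgebra A D" "D1 \<subseteq> D" "D2 \<subseteq> D"
proof
  let ?G = "{u * v | u v. u \<in> D1 \<and> v \<in> D2}"
  have "u \<in> ?G" if "u \<in> D1" for u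
    using that is_central_hopf_subalgebraD(2)[OF assms(2)]
    by (metis (mono_tags, lifting) mem_Collect_eq mult_1_right)
  moreover have "v \<in> ?G" if "v \<in> D2" for v
    using that is_central_hopf_subalgebraD(2)[OF assms(1)]
    by (metis (mono_tags, lifting) mem_Collect_eq mult_1_left)
  ultimately show "D1 \<subseteq> span ?G" "D2 \<subseteq> span ?G"
    using span_superset by blast+
qed (rule is_central_hopf_subalgebra_span_mult[OF assms])

lemma is_central_hopf_subalgebra_Union:
  assumes D0: "is_central_hopf_subalgebra A D0"
  shows "is_central_hopf_subalgebra A (\<Union>{D. is_central_hopf_subalgebra A D})"
    (is "is_central_hopf_subalgebra A ?U")
proof (rule is_central_hopf_subalgebraI)
  have common: "\<exists>D. is_central_hopf_subalgebra A D \<and> x \<in> D \<and> y \<in> D"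
    if xy: "x \<in> ?U" "y \<in> ?U" for x y
  proof -
    obtain D1 D2 where D12: "is_central_hopf_subalgebra A D1" "x \<in> D1"
      "is_central_hopf_subalgebra A D2" "y \<in> D2"
      using xy by blast
    obtain D where "is_central_hopf_subalgebra A D" "D1 \<subseteq> D" "D2 \<subseteq> D"
      by (rule central_hopf_subalgebras_directed[OF D12(1,3)])
    with D12(2,4) show ?thesis by blast
  qed
  show "subspace ?U"
  proof (rule subspaceI)
    show "0 \<in> ?U"
      using D0 subspace_0[OF is_central_hopf_subalgebraD(1)[OF D0]] by blast
  next
    fix x y assume "x \<in> ?U" "y \<in> ?U"
    then obtain D where "is_central_hopf_subalgebra A D" "x \<in> D" "y \<in> D"
      using common by blast
    then show "x + y \<in> ?U"
      using subspace_add[OF is_central_hopf_subalgebraD(1)] by blast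
  next
    fix c x assume "x \<in> ?U"
    then obtain D where "is_central_hopf_subalgebra A D" "x \<in> D"
      by blast
    then show "hsc A c x \<in> ?U"
      using subspace_scale[OF is_central_hopf_subalgebraD(1)] by blast
  qed
  show "1 \<in> ?U"
    using D0 is_central_hopf_subalgebraD(2)[OF D0] by blast
  show "x * y \<in> ?U" if xy: "x \<in> ?U" "y \<in> ?U" for x y
  proof -
    obtain D where "is_central_hopf_subalgebra A D" "x \<in> D" "y \<in> D"
      using common[OF xy] by blast
    then show ?thesis
      using is_central_hopf_subalgebraD(3) by blast
  qed
  show "?U \<subseteq> comul_preimage ?U"
  proof
    fix x assume "x \<in> ?U"
    then obtain D where D: "is_central_hopf_subalgebra A D" "x \<in> D"
      by blast
    then have "D \<subseteq> ?U" "x \<in> comul_preimage D"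
      using is_central_hopf_subalgebraD(4)[OF D(1)] by blast+
    then show "x \<in> comul_preimage ?U"
      using comul_preimage_mono by blast
  qed
  show "antip A x \<in> ?U" if hx: "x \<in> ?U" for x
  proof -
    obtain D where "is_central_hopf_subalgebra A D" "x \<in> D"
      using hx by blast
    then show ?thesis
      using is_central_hopf_subalgebraD(5) by blast
  qed
  show "?U \<subseteq> center"
    using is_central_hopf_subalgebraD(6) by blast
qed

lemma hopf_center_eq_Union:
  assumes "is_central_hopf_subalgebra A D0"
  shows "hopf_center A = \<Union>{D. is_central_hopf_subalgebra A D}"
  unfolding hopf_center_def
proof (rule the_equality)
  show "is_central_hopf_subalgebra A (\<Union>{D. is_central_hopf_subalgebra A D}) \<and>
      (\<forall>D. is_central_hopf_subalgebra A D \<longrightarrow> D \<subseteq> \<Union>{D. is_central_hopf_subalgebra A D})"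
    using is_central_hopf_subalgebra_Union[OF assms] by blast
next
  fix C
  assume "is_central_hopf_subalgebra A C \<and> (\<forall>D. is_central_hopf_subalgebra A D \<longrightarrow> D \<subseteq> C)"
  then show "C = \<Union>{D. is_central_hopf_subalgebra A D}"
    using is_central_hopf_subalgebra_Union[OF assms] by blast
qed

lemma is_central_hopf_subalgebra_hopf_center:
  "is_central_hopf_subalgebra A D \<Longrightarrow> is_central_hopf_subalgebra A (hopf_center A)"
  using hopf_center_eq_Union is_central_hopf_subalgebra_Union by metis

lemma central_hopf_subalgebra_subset_hopf_center:
  "is_central_hopf_subalgebra A D \<Longrightarrow> D \<subseteq> hopf_center A"
  using hopf_center_eq_Union by blast

end

section \<open>Images and coinvariants\<close>

context hopf_hom
begin

lemma is_hopf_subalgebra_image: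
  assumes C: "is_hopf_subalgebra A C"
  shows "is_hopf_subalgebra B (f ` C)"
proof (rule tgt.is_hopf_subalgebraI)
  note C = src.is_hopf_subalgebraD[OF C]
  show "tgt.subspace (f ` C)"
  proof (rule tgt.subspaceI)
    show "0 \<in> f ` C"
      using src.subspace_0[OF C(1)] hom_zero by (metis imageI)
    show "x + y \<in> f ` C" if "x \<in> f ` C" "y \<in> f ` C" for x y
      using that src.subspace_add[OF C(1)] by (auto simp flip: hom_add)
    show "hsc B c x \<in> f ` C" if "x \<in> f ` C" for c x
      using that src.subspace_scale[OF C(1)] by (auto simp flip: hom_scale)
  qed
  show "1 \<in> f ` C"
    using C(2) hom_one by (metis imageI)
  show "x * y \<in> f ` C" if "x \<in> f ` C" "y \<in> f ` C" for x y
    using that C(3) by (auto simp flip: hom_mult)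
  show "antip B x \<in> f ` C" if "x \<in> f ` C" for x
    using that C(5) by (auto simp flip: hom_antip)
  show "f ` C \<subseteq> tgt.comul_preimage (f ` C)"
  proof
    fix b assume "b \<in> f ` C"
    then obtain x where x: "b = f x" "x \<in> C" by blast
    then obtain L where L: "\<forall>(c, (y, z)) \<in> set L. y \<in> C \<and> z \<in> C" "teq2 (hsc A) (hsc A) (comul A x) L"
      using C(4) unfolding src.comul_preimage_def by blast
    have "teq2 (hsc B) (hsc B) (comul B b) (map (apsnd (map_prod f f)) L)"
      unfolding x(1) by (intro teq2_trans[OF hom_comul] teq2_map[OF _ _ _ _ L(2)]) simp_all
    with L(1) show "b \<in> tgt.comul_preimage (f ` C)"
      unfolding tgt.comul_preimage_def by (intro CollectI exI[of _ "map (apsnd (map_prod f f)) L"]) auto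
  qed
qed

lemma hom_eq_counit_if_scalar:
  assumes "f x \<in> scalars B"
  shows "f x = hsc B (counit A x) 1"
proof -
  obtain s where s: "f x = hsc B s 1"
    using assms unfolding scalars_def by blast
  have "counit A x = s"
    using arg_cong[OF s, of "counit B"] by simp
  with s show ?thesis by simp
qed

lemma subset_left_coinv:
  assumes D: "is_hopf_subalgebra A D" and scalar: "f ` D \<subseteq> scalars B"
  shows "D \<subseteq> left_coinv A B f"
proof
  fix d assume "d \<in> D"
  then obtain L where L: "\<forall>(c, (y, z)) \<in> set L. y \<in> D \<and> z \<in> D" "teq2 (hsc A) (hsc A) (comul A d) L"
    using src.is_hopf_subalgebraD(4)[OF D] unfolding src.comul_preimage_def by blast
  have "f y = hsc B (counit A y) 1" if "y \<in> D" for y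
    using that scalar hom_eq_counit_if_scalar by blast
  then have scalar_factors:
    "map (apsnd (map_prod f id)) L = map (\<lambda>(c, y, z). (c, hsc B (counit A y) 1, z)) L"
    using L(1) by (auto intro!: map_cong)
  have "teq2 (hsc B) (hsc A) (map (apsnd (map_prod f id)) (comul A d)) (map (apsnd (map_prod f id)) L)"
    by (rule teq2_map[OF _ _ _ _ L(2)]) simp_all
  also have "teq2 (hsc B) (hsc A) \<dots> [(1, (1, src.ev (\<lambda>w. hsc A (counit A (fst w)) (snd w)) L))]"
    unfolding scalar_factors by (rule src.teq2_collapse_left)
  finally have "teq2 (hsc B) (hsc A) (map (apsnd (map_prod f id)) (comul A d))
      [(1, (1, src.ev (\<lambda>w. hsc A (counit A (fst w)) (snd w)) L))]" .
  moreover have "src.ev (\<lambda>w. hsc A (counit A (fst w)) (snd w)) L = d"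
    using src.eval_fsum_teq2[OF teq2_sym[OF L(2)], of "\<lambda>y z. hsc A (counit A y) z"] src.counit_left[of d]
    by (simp add: bilinear_map_def src.scale_left_distrib src.scale_right_distrib mult.commute)
  ultimately show "d \<in> left_coinv A B f"
    unfolding left_coinv_def by (simp add: case_prod_beta' apsnd_def map_prod_def)
qed

lemma is_central_hopf_subalgebra_range:
  assumes "range f \<subseteq> center"
  shows "is_central_hopf_subalgebra B (range f)"
  unfolding is_central_hopf_subalgebra_def
  using is_hopf_subalgebra_image[OF src.is_hopf_subalgebra_UNIV] assms by (rule conjI)

lemma hopf_center_subset_left_coinv:
  assumes surj: "surj f" and trivial: "hopf_center B = scalars B"
    and D0: "is_central_hopf_subalgebra A D0"
  shows "hopf_center A \<subseteq> left_coinv A B f"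
proof -
  have Z: "is_central_hopf_subalgebra A (hopf_center A)"
    by (rule src.is_central_hopf_subalgebra_hopf_center[OF D0])
  then have "is_central_hopf_subalgebra B (f ` hopf_center A)"
    unfolding is_central_hopf_subalgebra_def
    using is_hopf_subalgebra_image image_subset_center[OF hom_mult surj] by blast
  then have "f ` hopf_center A \<subseteq> scalars B"
    using tgt.central_hopf_subalgebra_subset_hopf_center trivial by simp
  then show ?thesis
    using subset_left_coinv Z unfolding is_central_hopf_subalgebra_def by blast
qed

end

lemma exact_seq_hopf_hom:
  assumes "exact_seq B A H \<iota> \<pi>"
  shows "hopf_hom B A \<iota>" "hopf_hom A H \<pi>"
  using assms unfolding exact_seq_def hopf_hom_def hopf_hom_axioms_def hopf_algebra_def by blast+

theorem corollary2p12:
  fixes B :: "('k::field, 'b::ring_1) hopf_str"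
    and A :: "('k, 'a::ring_1) hopf_str"
    and H :: "('k, 'h::ring_1) hopf_str"
    and \<iota> :: "'b \<Rightarrow> 'a" and \<pi> :: "'a \<Rightarrow> 'h"
  assumes "central_exact_seq B A H \<iota> \<pi>"
    and "noetherian_ring TYPE('a)"
    and "hopf_center H = scalars H"
  shows "range \<iota> = hopf_center A"
proof -
  have exact: "exact_seq B A H \<iota> \<pi>" and central: "range \<iota> \<subseteq> center"
    using assms(1) unfolding central_exact_seq_def by blast+
  then have surj: "surj \<pi>" and coinv: "range \<iota> = left_coinv A H \<pi>"
    unfolding exact_seq_def by blast+
  interpret \<iota>: hopf_hom B A \<iota>
    by (rule exact_seq_hopf_hom(1)[OF exact])
  interpret \<pi>: hopf_hom A H \<pi>
    by (rule exact_seq_hopf_hom(2)[OF exact])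
  have image_central: "is_central_hopf_subalgebra A (range \<iota>)"
    by (rule \<iota>.is_central_hopf_subalgebra_range[OF central])
  have "hopf_center A \<subseteq> range \<iota>"
    using \<pi>.hopf_center_subset_left_coinv[OF surj assms(3) image_central] coinv by simp
  moreover have "range \<iota> \<subseteq> hopf_center A"
    by (rule \<iota>.tgt.central_hopf_subalgebra_subset_hopf_center[OF image_central])
  ultimately show ?thesis
    by (rule subset_antisym[rotated])
qed

end
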